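(* Let $\pi$ be a function assigning to each $3$-element subset $S$ of $\{a,b,c,d,e\}$ a string $\pi(S)$ of length $3$ that is an ordering of the three elements of $S$, and suppose that $d(\pi(S),\pi(S'))\le 2$ for all $3$-element subsets $S,S'$ with $|S\oplus S'|=2$. Then for every $2$-element subset $\{x,y\}\subseteq\{a,b,c,d,e\}$ there exists a position $i\in\{1,2,3\}$ such that either $\pi(S)[i]=x$ for every $3$-element set $S$ with $\{x,y\}\subset S\subseteq\{a,b,c,d,e\}$, or $\pi(S)[i]=y$ for every such $S$.
   Context: $d(X,Y)$ denotes the Hamming distance between strings $X,Y$ of equal length, and $\pi(S)[i]$ denotes the $i$-th letter of the string $\pi(S)$. $S\oplus S'$ is the symmetric difference of sets. *)

theory Defs
  imports Main
begin

definition hamming :: "'a list \<Rightarrow> 'a list \<Rightarrow> nat" where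
  "hamming xs ys = card {i. i < length xs \<and> xs ! i \<noteq> ys ! i}"

definition symdiff :: "'a set \<Rightarrow> 'a set \<Rightarrow> 'a set" where
  "symdiff A B = (A - B) \<union> (B - A)"

end

theory Submission
  imports Defs
begin

text \<open>Two orderings of 3-sets through a common pair \<open>{x, y}\<close> that differ in at most two
  places must agree somewhere, and the common letter there can only be \<open>x\<close> or \<open>y\<close>. So any two
  of the orderings place \<open>x\<close> at the same position or place \<open>y\<close> at the same position. If the
  position of \<open>x\<close> is not constant over all 3-sets through \<open>{x, y}\<close>, say it differs between
  \<open>S\<close> and \<open>T\<close>, then the position of \<open>y\<close> agrees on \<open>S\<close> and \<open>T\<close>, and every other set \<open>R\<close>
  disagrees in the position of \<open>x\<close> with one of them and hence shares its position of \<open>y\<close>.\<close>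

definition position :: "'a list \<Rightarrow> 'a \<Rightarrow> nat" where
  "position xs x = (THE i. i < length xs \<and> xs ! i = x)"

lemma position_eqI:
  assumes "distinct xs" "i < length xs" "xs ! i = x"
  shows "position xs x = i"
  unfolding position_def
  using assms by (auto intro!: the_equality simp: nth_eq_iff_index_eq)

lemma nth_position:
  assumes "distinct xs" "x \<in> set xs"
  shows "position xs x < length xs" and "xs ! position xs x = x"
proof -
  obtain i where "i < length xs" "xs ! i = x"
    using assms(2) by (auto simp: in_set_conv_nth)
  with position_eqI[OF assms(1)] show "position xs x < length xs" "xs ! position xs x = x"
    by simp_all
qed

lemma hamming_less_length_imp_common_position:
  assumes "length ys = length xs" "hamming xs ys < length xs"
  shows "\<exists>i<length xs. xs ! i = ys ! i"
proof (rule ccontr)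
  assume "\<not> ?thesis"
  then have "{i. i < length xs \<and> xs ! i \<noteq> ys ! i} = {..<length xs}"
    by auto
  with assms(2) show False
    unfolding hamming_def by simp
qed

lemma positions_agree_if_close:
  assumes "distinct xs" "distinct ys" "length ys = length xs" "hamming xs ys < length xs"
    and "set xs \<inter> set ys = {x, y}"
  shows "position xs x = position ys x \<or> position xs y = position ys y"
proof -
  obtain i where i: "i < length xs" "xs ! i = ys ! i"
    using hamming_less_length_imp_common_position assms(3,4) by blast
  have "xs ! i \<in> set xs \<inter> set ys"
    using i assms(3) by (metis IntI nth_mem)
  with assms(5) have "xs ! i = x \<or> xs ! i = y"
    by blast
  moreover have "position xs (xs ! i) = i" "position ys (xs ! i) = i"
    using i assms(1-3) by (simp_all add: position_eqI)
  ultimately show ?thesis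
    by auto
qed

lemma triples_through_pair_meet:
  assumes "card S = 3" "card T = 3" "{x, y} \<subset> S" "{x, y} \<subset> T" "x \<noteq> y" "S \<noteq> T"
  shows "S \<inter> T = {x, y}" and "card (symdiff S T) = 2"
proof -
  have triple: "\<exists>z. z \<notin> {x, y} \<and> R = {x, y, z}" if R: "card R = 3" "{x, y} \<subset> R" for R
  proof -
    obtain z where z: "z \<in> R" "z \<notin> {x, y}"
      using R(2) by blast
    have "{x, y, z} \<subseteq> R" "card {x, y, z} = 3"
      using R(2) z assms(5) by auto
    with R(1) have "{x, y, z} = R"
      by (metis card_subset_eq card.infinite zero_neq_numeral)
    with z show ?thesis
      by blast
  qed
  obtain z w where "z \<notin> {x, y}" "S = {x, y, z}" "w \<notin> {x, y}" "T = {x, y, w}"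
    using triple assms(1-4) by meson
  moreover from this have "z \<noteq> w"
    using assms(6) by blast
  ultimately have "S \<inter> T = {x, y}" "symdiff S T = {z, w}"
    unfolding symdiff_def by auto
  with \<open>z \<noteq> w\<close> show "S \<inter> T = {x, y}" "card (symdiff S T) = 2"
    by simp_all
qed

lemma pairwise_agreement_imp_constant:
  assumes "\<And>S T. S \<in> F \<Longrightarrow> T \<in> F \<Longrightarrow> f S = f T \<or> g S = g T"
  shows "(\<forall>S\<in>F. \<forall>T\<in>F. f S = f T) \<or> (\<forall>S\<in>F. \<forall>T\<in>F. g S = g T)"
proof (rule disjCI)
  assume "\<not> (\<forall>S\<in>F. \<forall>T\<in>F. g S = g T)"
  then obtain S T where ST: "S \<in> F" "T \<in> F" "g S \<noteq> g T"
    by blast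
  have "f R = f S" if "R \<in> F" for R
    using assms[OF that ST(1)] assms[OF that ST(2)] assms[OF ST(1,2)] ST(3) by metis
  then show "\<forall>S\<in>F. \<forall>T\<in>F. f S = f T"
    by simp
qed

theorem lemma3p3:
  fixes a b c d e :: 'a
    and \<pi> :: "'a set \<Rightarrow> 'a list"
  defines "U \<equiv> {a, b, c, d, e}"
  assumes dist: "distinct [a, b, c, d, e]"
    and ord: "\<And>S. S \<subseteq> U \<Longrightarrow> card S = 3 \<Longrightarrow>
                 length (\<pi> S) = 3 \<and> distinct (\<pi> S) \<and> set (\<pi> S) = S"
    and close: "\<And>S S'. S \<subseteq> U \<Longrightarrow> card S = 3 \<Longrightarrow> S' \<subseteq> U \<Longrightarrow> card S' = 3 \<Longrightarrow>
                 card (symdiff S S') = 2 \<Longrightarrow> hamming (\<pi> S) (\<pi> S') \<le> 2"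
  shows "\<forall>x\<in>U. \<forall>y\<in>U. x \<noteq> y \<longrightarrow>
           (\<exists>i<3. (\<forall>S. S \<subseteq> U \<and> card S = 3 \<and> {x, y} \<subset> S \<longrightarrow> \<pi> S ! i = x)
                \<or> (\<forall>S. S \<subseteq> U \<and> card S = 3 \<and> {x, y} \<subset> S \<longrightarrow> \<pi> S ! i = y))"
proof (intro ballI impI)
  fix x y assume "x \<in> U" "y \<in> U" "x \<noteq> y"
  define F where "F = {S. S \<subseteq> U \<and> card S = 3 \<and> {x, y} \<subset> S}"
  have placed: "position (\<pi> S) z < 3 \<and> \<pi> S ! position (\<pi> S) z = z"
    if "S \<in> F" "z \<in> {x, y}" for S z
    using that ord nth_position[of "\<pi> S" z] unfolding F_def by auto
  have "position (\<pi> S) x = position (\<pi> T) x \<or> position (\<pi> S) y = position (\<pi> T) y"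
    if "S \<in> F" "T \<in> F" for S T
  proof (cases "S = T")
    case False
    with that \<open>x \<noteq> y\<close> have "S \<inter> T = {x, y}" "card (symdiff S T) = 2"
      using triples_through_pair_meet[of S T x y] unfolding F_def by simp_all
    moreover have "S \<subseteq> U" "card S = 3" "T \<subseteq> U" "card T = 3"
      using that unfolding F_def by simp_all
    ultimately show ?thesis
      using ord[of S] ord[of T] close[of S T] by (intro positions_agree_if_close) simp_all
  qed simp
  then have "\<exists>z\<in>{x, y}. \<forall>S\<in>F. \<forall>T\<in>F. position (\<pi> S) z = position (\<pi> T) z"
    using pairwise_agreement_imp_constant[of F "\<lambda>S. position (\<pi> S) x" "\<lambda>S. position (\<pi> S) y"]
    by blast
  then obtain z where z: "z \<in> {x, y}"
    and same_position: "\<forall>S\<in>F. \<forall>T\<in>F. position (\<pi> S) z = position (\<pi> T) z"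
    by blast
  have "\<exists>i<3. \<forall>S\<in>F. \<pi> S ! i = z"
  proof (cases "F = {}")
    case False
    then obtain S\<^sub>0 where "S\<^sub>0 \<in> F"
      by blast
    with placed z same_position show ?thesis
      by (intro exI[of _ "position (\<pi> S\<^sub>0) z"]) metis
  qed (rule exI[of _ 0], simp)
  with z show "\<exists>i<3. (\<forall>S. S \<subseteq> U \<and> card S = 3 \<and> {x, y} \<subset> S \<longrightarrow> \<pi> S ! i = x)
                \<or> (\<forall>S. S \<subseteq> U \<and> card S = 3 \<and> {x, y} \<subset> S \<longrightarrow> \<pi> S ! i = y)"
    unfolding F_def by auto
qed

end
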